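(* Assume $X_0\in L^\infty$ and $x\in\mathbb{R}$. Then $X^*$ is beating-performance-variance (BPV) efficient in $\mathscr{X}(x)$ if and only if $X^*$ is variance-minimal in $\mathscr{X}_{\mathrm{icx}}(x,X_0+z)$ for some $z\ge \frac{x}{\mathrm{E}[\rho]}-Q_0(1)$.
   Context: $(\Omega,\mathcal{F},\mathbb{P})$ is a complete nonatomic probability space. $\rho\in L^2$ with $\mathbb{P}(\rho>0)=1$ and $\mathrm{Var}[\rho]>0$. For a random variable $X$, $Q_X(t)=\inf\{y:\mathbb{P}(X\le y)>t\}$ for $t\in[0,1)$, $Q_X(1):=\lim_{t\uparrow1}Q_X(t)$; $Q_0:=Q_{X_0}$. For random variables $X,Y$, $X\succeq_{\mathrm{icx}}Y$ means $\mathrm{E}[f(X)]\ge\mathrm{E}[f(Y)]$ for all increasing convex $f$ (equivalently $\int_t^1Q_X\ge\int_t^1Q_Y$ for all $t\in[0,1]$). $\mathscr{X}(x)=\{X\in L^2:\mathrm{E}[\rho X]\le x\}$; $\mathscr{X}_{\mathrm{icx}}(x,Y_0)=\{X\in L^2:\mathrm{E}[\rho X]\le x,\ X\succeq_{\mathrm{icx}}Y_0\}$, and $X$ is variance-minimal in it if it minimizes $\mathrm{Var}[X]$ over it. The beating performance of $X\in L^2$ is $\psi(X)=\sup\{m\in\mathbb{R}: X-m\succeq_{\mathrm{icx}}X_0\}$ (with $\sup\emptyset=-\infty$). $X\in\mathscr{X}(x)$ is BPV efficient in $\mathscr{X}(x)$ if there is no $Y\in\mathscr{X}(x)$ with $\psi(Y)\ge\psi(X)$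 and $\mathrm{Var}[Y]\le\mathrm{Var}[X]$ with at least one inequality strict. *)

theory Defs
  imports "HOL-Probability.Probability"
begin

definition nonatomic :: "'a measure \<Rightarrow> bool" where
  "nonatomic M \<longleftrightarrow> (\<forall>A\<in>sets M. measure M A > 0 \<longrightarrow>
      (\<exists>B\<in>sets M. B \<subseteq> A \<and> 0 < measure M B \<and> measure M B < measure M A))"

definition L2 :: "'a measure \<Rightarrow> ('a \<Rightarrow> real) set" where
  "L2 M = {X. X \<in> borel_measurable M \<and> integrable M (\<lambda>\<omega>. (X \<omega>)\<^sup>2)}"

definition Linf :: "'a measure \<Rightarrow> ('a \<Rightarrow> real) set" where
  "Linf M = {X. X \<in> borel_measurable M \<and> (\<exists>C. AE \<omega> in M. \<bar>X \<omega>\<bar> \<le> C)}"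

definition expect :: "'a measure \<Rightarrow> ('a \<Rightarrow> real) \<Rightarrow> real" where
  "expect M X = (\<integral>\<omega>. X \<omega> \<partial>M)"

definition var :: "'a measure \<Rightarrow> ('a \<Rightarrow> real) \<Rightarrow> real" where
  "var M X = (\<integral>\<omega>. (X \<omega> - expect M X)\<^sup>2 \<partial>M)"

text \<open>Expectation in the extended sense, E[Z] = E[Z^+] - E[Z^-] in the extended reals
  (well defined whenever the negative part is integrable, which is the case for
  f(X) with f increasing convex and X in L2).\<close>
definition ext_expect :: "'a measure \<Rightarrow> ('a \<Rightarrow> real) \<Rightarrow> ereal" where
  "ext_expect M Z = enn2ereal (\<integral>\<^sup>+\<omega>. ennreal (max (Z \<omega>) 0) \<partial>M)
                   - enn2ereal (\<integral>\<^sup>+\<omega>. ennreal (max (- Z \<omega>) 0) \<partial>M)"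

definition icx_ge :: "'a measure \<Rightarrow> ('a \<Rightarrow> real) \<Rightarrow> ('a \<Rightarrow> real) \<Rightarrow> bool" where
  "icx_ge M X Y \<longleftrightarrow> (\<forall>f::real \<Rightarrow> real. mono f \<and> convex_on UNIV f \<longrightarrow>
      ext_expect M (\<lambda>\<omega>. f (Y \<omega>)) \<le> ext_expect M (\<lambda>\<omega>. f (X \<omega>)))"

definition quantile :: "'a measure \<Rightarrow> ('a \<Rightarrow> real) \<Rightarrow> real \<Rightarrow> real" where
  "quantile M X t = Inf {y. measure M {\<omega>\<in>space M. X \<omega> \<le> y} > t}"

definition quantile_one :: "'a measure \<Rightarrow> ('a \<Rightarrow> real) \<Rightarrow> real" where
  "quantile_one M X = Lim (at_left 1) (quantile M X)"

definition admissible :: "'a measure \<Rightarrow> ('a \<Rightarrow> real) \<Rightarrow> real \<Rightarrow> ('a \<Rightarrow> real) set" where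
  "admissible M \<rho> x = {X \<in> L2 M. expect M (\<lambda>\<omega>. \<rho> \<omega> * X \<omega>) \<le> x}"

definition admissible_icx ::
  "'a measure \<Rightarrow> ('a \<Rightarrow> real) \<Rightarrow> real \<Rightarrow> ('a \<Rightarrow> real) \<Rightarrow> ('a \<Rightarrow> real) set" where
  "admissible_icx M \<rho> x Y0 = {X \<in> L2 M. expect M (\<lambda>\<omega>. \<rho> \<omega> * X \<omega>) \<le> x \<and> icx_ge M X Y0}"

definition variance_minimal :: "'a measure \<Rightarrow> ('a \<Rightarrow> real) set \<Rightarrow> ('a \<Rightarrow> real) \<Rightarrow> bool" where
  "variance_minimal M S X \<longleftrightarrow> X \<in> S \<and> (\<forall>Y\<in>S. var M X \<le> var M Y)"

text \<open>Beating performance \<psi>(X) = sup{m : X - m \<succeq>icx X0}, with sup {} = -\<infinity>.\<close>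
definition beating_perf :: "'a measure \<Rightarrow> ('a \<Rightarrow> real) \<Rightarrow> ('a \<Rightarrow> real) \<Rightarrow> ereal" where
  "beating_perf M X0 X = Sup (ereal ` {m. icx_ge M (\<lambda>\<omega>. X \<omega> - m) X0})"

definition bpv_efficient ::
  "'a measure \<Rightarrow> ('a \<Rightarrow> real) \<Rightarrow> ('a \<Rightarrow> real) \<Rightarrow> real \<Rightarrow> ('a \<Rightarrow> real) \<Rightarrow> bool" where
  "bpv_efficient M \<rho> X0 x X \<longleftrightarrow> X \<in> admissible M \<rho> x \<and>
     \<not> (\<exists>Y\<in>admissible M \<rho> x. beating_perf M X0 Y \<ge> beating_perf M X0 X \<and> var M Y \<le> var M X \<and>
          (beating_perf M X0 Y > beating_perf M X0 X \<or> var M Y < var M X))"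

end

theory Submission
  imports Defs
begin

(* Because the benchmark X0 is bounded, the supremum defining the beating performance psi is
   attained, so X_icx(x, X0 + z) is exactly the set of admissible X with psi(X) >= z.  The riskless
   strategy c = x / E[rho] has variance 0 and psi(c) >= c - Q0(1) =: z0, and no admissible strategy
   of variance 0 beats z0.  Hence an efficient X has a finite psi(X) = z >= z0 and is
   variance-minimal among the admissible strategies with psi >= z.  Conversely, let X be
   variance-minimal among those with psi >= z, where z >= z0.  A strategy Y dominating X with
   psi(Y) > psi(X) >= z has positive variance, and the mixture t Y + (1 - t) c with t < 1 close to
   1 still has psi >= z but variance t^2 Var[Y] < Var[X], a contradiction. *)

definition mono_convex :: "(real \<Rightarrow> real) \<Rightarrow> bool" where
  "mono_convex f \<longleftrightarrow> mono f \<and> convex_on UNIV f"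

lemma icx_ge_iff_mono_convex:
  "icx_ge M X Y \<longleftrightarrow>
     (\<forall>f. mono_convex f \<longrightarrow> ext_expect M (\<lambda>w. f (Y w)) \<le> ext_expect M (\<lambda>w. f (X w)))"
  by (simp add: icx_ge_def mono_convex_def)

lemma mono_convex_affine:
  assumes f: "mono_convex f" and "0 \<le> t"
  shows "mono_convex (\<lambda>u. f (t * u + k))"
proof -
  have "mono (\<lambda>u. f (t * u + k))"
  proof (rule monoI)
    fix u v :: real assume "u \<le> v"
    then have "t * u + k \<le> t * v + k" using \<open>0 \<le> t\<close> by (simp add: mult_left_mono)
    then show "f (t * u + k) \<le> f (t * v + k)" using f by (simp add: mono_convex_def monoD)
  qed
  moreover have "convex_on UNIV (\<lambda>u. f (t * u + k))"
  proof (rule convex_onI)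
    fix s u v :: real assume "0 < s" "s < 1"
    have "t * ((1 - s) *\<^sub>R u + s *\<^sub>R v) + k = (1 - s) *\<^sub>R (t * u + k) + s *\<^sub>R (t * v + k)"
      by (simp add: algebra_simps)
    then show "f (t * ((1 - s) *\<^sub>R u + s *\<^sub>R v) + k) \<le> (1 - s) * f (t * u + k) + s * f (t * v + k)"
      using f convex_onD[of UNIV f s "t * u + k" "t * v + k"] \<open>0 < s\<close> \<open>s < 1\<close>
      by (simp add: mono_convex_def)
  qed simp
  ultimately show ?thesis by (simp add: mono_convex_def)
qed

lemma mono_convex_ident: "mono_convex (\<lambda>u. u)"
  by (simp add: mono_convex_def mono_def convex_on_ident)

lemma mono_convex_hinge: "mono_convex (\<lambda>u. max (u - a) 0)"
proof -
  have "convex_on UNIV (\<lambda>u::real. max (u - a) 0)"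
  proof (rule convex_onI)
    fix s u v :: real assume "0 < s" "s < 1"
    then have "(1 - s) * (u - a) \<le> (1 - s) * max (u - a) 0" "s * (v - a) \<le> s * max (v - a) 0"
      by (auto intro: mult_left_mono)
    moreover have "(1 - s) *\<^sub>R u + s *\<^sub>R v - a = (1 - s) * (u - a) + s * (v - a)"
      by (simp add: algebra_simps)
    moreover have "0 \<le> (1 - s) * max (u - a) 0 + s * max (v - a) 0"
      using \<open>0 < s\<close> \<open>s < 1\<close> by simp
    ultimately show "max ((1 - s) *\<^sub>R u + s *\<^sub>R v - a) 0 \<le> (1 - s) * max (u - a) 0 + s * max (v - a) 0"
      unfolding max.bounded_iff by linarith
  qed simp
  then show ?thesis by (auto simp: mono_convex_def mono_def le_max_iff_disj)
qed

lemma convex_on_chord_slopes: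
  fixes f :: "real \<Rightarrow> real"
  assumes "convex_on UNIV f" "a < b" "b < c"
  shows "(f b - f a) / (b - a) \<le> (f c - f a) / (c - a)"
    and "(f c - f a) / (c - a) \<le> (f c - f b) / (c - b)"
proof -
  have flip: "(f p - f q) / (p - q) = (f q - f p) / (q - p)" for p q
    by (metis minus_diff_eq minus_divide_divide)
  show "(f b - f a) / (b - a) \<le> (f c - f a) / (c - a)"
       "(f c - f a) / (c - a) \<le> (f c - f b) / (c - b)"
    using convex_on_slope_le[OF assms(1) _ _ assms(2,3)] by (simp_all add: flip)
qed

lemma mono_convex_increment_le:
  assumes f: "mono_convex f" and "u \<le> B" "0 < d"
  shows "f u - f (u - d) \<le> d * (f (B + 1) - f B)"
proof -
  have c: "convex_on UNIV f" using f by (simp add: mono_convex_def)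
  have "(f u - f (u - d)) / d \<le> (f (B + 1) - f u) / (B + 1 - u)"
    using convex_on_chord_slopes[OF c, of "u - d" u "B + 1"] assms by simp
  also have "\<dots> \<le> f (B + 1) - f B"
  proof (cases "u < B")
    case True
    then show ?thesis using convex_on_chord_slopes(2)[OF c, of u B "B + 1"] by simp
  next
    case False
    then show ?thesis using \<open>u \<le> B\<close> by simp
  qed
  finally show ?thesis using \<open>0 < d\<close> by (simp add: divide_le_eq mult.commute)
qed

section \<open>The increasing convex order\<close>

lemma ext_expect_eq_integral:
  assumes "integrable M Z"
  shows "ext_expect M Z = ereal (integral\<^sup>L M Z)"
proof -
  have pos: "integrable M (\<lambda>w. max (Z w) 0)" and neg: "integrable M (\<lambda>w. max (- Z w) 0)"
    using assms by auto
  have "integral\<^sup>L M Z = integral\<^sup>L M (\<lambda>w. max (Z w) 0 - max (- Z w) 0)"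
    by (intro Bochner_Integration.integral_cong) auto
  also have "\<dots> = integral\<^sup>L M (\<lambda>w. max (Z w) 0) - integral\<^sup>L M (\<lambda>w. max (- Z w) 0)"
    using pos neg by simp
  finally show ?thesis
    unfolding ext_expect_def
    using nn_integral_eq_integral[OF pos] nn_integral_eq_integral[OF neg] by simp
qed

lemma ext_expect_mono_AE:
  assumes "AE w in M. Z1 w \<le> Z2 w"
  shows "ext_expect M Z1 \<le> ext_expect M Z2"
proof -
  have "(\<integral>\<^sup>+w. ennreal (max (Z1 w) 0) \<partial>M) \<le> (\<integral>\<^sup>+w. ennreal (max (Z2 w) 0) \<partial>M)"
   and "(\<integral>\<^sup>+w. ennreal (max (- Z2 w) 0) \<partial>M) \<le> (\<integral>\<^sup>+w. ennreal (max (- Z1 w) 0) \<partial>M)"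
    using assms by (auto intro!: nn_integral_mono_AE ennreal_leI elim!: eventually_mono)
  then show ?thesis
    unfolding ext_expect_def by (intro ereal_minus_mono) (simp_all add: less_eq_ennreal.rep_eq)
qed

lemma icx_ge_if_AE_le:
  assumes "AE w in M. Y w \<le> X w"
  shows "icx_ge M X Y"
  unfolding icx_ge_iff_mono_convex
proof (intro allI impI ext_expect_mono_AE)
  fix f assume "mono_convex f"
  then show "AE w in M. f (Y w) \<le> f (X w)"
    using assms by (auto simp: mono_convex_def elim!: eventually_mono intro: monoD)
qed

lemma icx_ge_trans: "icx_ge M X Y \<Longrightarrow> icx_ge M Y Z \<Longrightarrow> icx_ge M X Z"
  unfolding icx_ge_def by (blast intro: order_trans)

lemma icx_ge_affine:
  assumes "icx_ge M X Y" "0 \<le> t"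
  shows "icx_ge M (\<lambda>w. t * X w + k) (\<lambda>w. t * Y w + k)"
  using assms mono_convex_affine unfolding icx_ge_iff_mono_convex by blast

lemma icx_ge_shift_iff: "icx_ge M X (\<lambda>w. Y w + z) \<longleftrightarrow> icx_ge M (\<lambda>w. X w - z) Y"
proof
  show "icx_ge M (\<lambda>w. X w - z) Y" if "icx_ge M X (\<lambda>w. Y w + z)"
    using icx_ge_affine[OF that, of 1 "- z"] by simp
  show "icx_ge M X (\<lambda>w. Y w + z)" if "icx_ge M (\<lambda>w. X w - z) Y"
    using icx_ge_affine[OF that, of 1 z] by simp
qed

lemma Linf_bound:
  assumes "X \<in> Linf M"
  obtains B where "AE w in M. \<bar>X w\<bar> \<le> B"
  using assms unfolding Linf_def by blast

lemma (in finite_measure) Linf_integrable_mono_comp: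
  fixes f :: "real \<Rightarrow> real"
  assumes "X \<in> Linf M" "mono f"
  shows "integrable M (\<lambda>w. f (X w))"
proof -
  obtain B where B: "AE w in M. \<bar>X w\<bar> \<le> B" using Linf_bound[OF assms(1)] .
  have "AE w in M. norm (f (X w)) \<le> \<bar>f (- B)\<bar> + \<bar>f B\<bar>"
    using B
  proof (rule eventually_mono)
    fix w assume "\<bar>X w\<bar> \<le> B"
    then have "f (- B) \<le> f (X w)" "f (X w) \<le> f B" using assms(2) by (auto intro: monoD)
    then show "norm (f (X w)) \<le> \<bar>f (- B)\<bar> + \<bar>f B\<bar>" by auto
  qed
  moreover have "(\<lambda>w. f (X w)) \<in> borel_measurable M"
    using assms borel_measurable_mono measurable_compose unfolding Linf_def by blast
  ultimately show ?thesis by (intro integrable_const_bound)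
qed

lemma (in finite_measure) Linf_integrable: "X \<in> Linf M \<Longrightarrow> integrable M X"
  using Linf_integrable_mono_comp[of X "\<lambda>u. u"] by (simp add: mono_def)

lemma (in prob_space) icx_ge_imp_expect_le:
  assumes "icx_ge M X Y" "integrable M X" "integrable M Y"
  shows "expect M Y \<le> expect M X"
proof -
  have "ext_expect M Y \<le> ext_expect M X"
    using assms(1) mono_convex_ident unfolding icx_ge_iff_mono_convex by blast
  then show ?thesis
    using ext_expect_eq_integral[OF assms(2)] ext_expect_eq_integral[OF assms(3)]
    by (simp add: expect_def)
qed

lemma (in prob_space) AE_le_if_icx_ge_const:
  assumes "icx_ge M (\<lambda>w. k) Y" "Y \<in> Linf M"
  shows "AE w in M. Y w \<le> k"
proof -
  let ?excess = "\<lambda>w. max (Y w - k) 0"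
  have int: "integrable M ?excess"
    using assms(2) by (rule Linf_integrable_mono_comp) (auto simp: mono_def)
  have "ext_expect M ?excess \<le> ext_expect M (\<lambda>w. max (k - k) 0)"
    using assms(1) mono_convex_hinge unfolding icx_ge_iff_mono_convex by blast
  then have "integral\<^sup>L M ?excess \<le> 0"
    using ext_expect_eq_integral[OF int] ext_expect_eq_integral[of M "\<lambda>w. 0"] by simp
  moreover have "0 \<le> integral\<^sup>L M ?excess" by simp
  ultimately have "AE w in M. ?excess w = 0"
    using integral_nonneg_eq_0_iff_AE[OF int] by simp
  then show ?thesis by (rule eventually_mono) simp
qed

lemma var_nonneg: "0 \<le> var M X"
  by (simp add: var_def)

lemma L2_measurable: "X \<in> L2 M \<Longrightarrow> X \<in> borel_measurable M"
  by (simp add: L2_def)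

context prob_space
begin

lemma L2_integrable: "X \<in> L2 M \<Longrightarrow> integrable M X"
  unfolding L2_def using square_integrable_imp_integrable by blast

lemma L2_const: "(\<lambda>w. c) \<in> L2 M"
  unfolding L2_def by simp

lemma L2_affine:
  assumes "X \<in> L2 M"
  shows "(\<lambda>w. t * X w + k) \<in> L2 M"
proof -
  have "(\<lambda>w. (t * X w + k)\<^sup>2) = (\<lambda>w. t\<^sup>2 * (X w)\<^sup>2 + 2 * t * k * X w + k\<^sup>2)"
    by (simp add: power2_eq_square algebra_simps)
  moreover have "integrable M (\<lambda>w. t\<^sup>2 * (X w)\<^sup>2 + 2 * t * k * X w + k\<^sup>2)"
    using assms L2_integrable[OF assms] unfolding L2_def by simp
  ultimately show ?thesis
    using L2_measurable[OF assms] unfolding L2_def by simp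
qed

lemma L2_mult_integrable:
  assumes "X \<in> L2 M" "Y \<in> L2 M"
  shows "integrable M (\<lambda>w. X w * Y w)"
proof (rule Bochner_Integration.integrable_bound)
  show "integrable M (\<lambda>w. (X w)\<^sup>2 + (Y w)\<^sup>2)"
    using assms unfolding L2_def by simp
  show "(\<lambda>w. X w * Y w) \<in> borel_measurable M"
    using L2_measurable[OF assms(1)] L2_measurable[OF assms(2)] by simp
  show "AE w in M. norm (X w * Y w) \<le> norm ((X w)\<^sup>2 + (Y w)\<^sup>2)"
  proof (rule AE_I2)
    fix w
    have "2 * \<bar>X w\<bar> * \<bar>Y w\<bar> \<le> (X w)\<^sup>2 + (Y w)\<^sup>2"
      using sum_squares_bound[of "\<bar>X w\<bar>" "\<bar>Y w\<bar>"] by simp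
    moreover have "0 \<le> \<bar>X w\<bar> * \<bar>Y w\<bar>"
      by simp
    ultimately have "\<bar>X w\<bar> * \<bar>Y w\<bar> \<le> (X w)\<^sup>2 + (Y w)\<^sup>2"
      by linarith
    then show "norm (X w * Y w) \<le> norm ((X w)\<^sup>2 + (Y w)\<^sup>2)"
      by (simp add: abs_mult)
  qed
qed

lemma var_affine:
  assumes "X \<in> L2 M"
  shows "var M (\<lambda>w. t * X w + k) = t\<^sup>2 * var M X"
proof -
  have "expect M (\<lambda>w. t * X w + k) = t * expect M X + k"
    using L2_integrable[OF assms] by (simp add: expect_def prob_space)
  then have "var M (\<lambda>w. t * X w + k) = (\<integral>w. t\<^sup>2 * (X w - expect M X)\<^sup>2 \<partial>M)"
    unfolding var_def by (simp add: power2_eq_square algebra_simps)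
  then show ?thesis
    by (simp add: var_def)
qed

lemma AE_eq_expect_if_var_eq_0:
  assumes "X \<in> L2 M" "var M X = 0"
  shows "AE w in M. X w = expect M X"
proof -
  have "integrable M (\<lambda>w. (X w - expect M X)\<^sup>2)"
    using L2_affine[OF assms(1), of 1 "- expect M X"] unfolding L2_def by simp
  then have "AE w in M. (X w - expect M X)\<^sup>2 = 0"
    using assms(2) integral_nonneg_eq_0_iff_AE[of M "\<lambda>w. (X w - expect M X)\<^sup>2"]
    unfolding var_def by simp
  then show ?thesis by (rule eventually_mono) simp
qed

lemma expect_pos:
  assumes "integrable M X" "AE w in M. X w > 0"
  shows "expect M X > 0"
  using integral_less_AE_space[of "\<lambda>w. 0" X] assms by (simp add: expect_def emeasure_space_1)

end

section \<open>The upper quantile of a bounded random variable\<close>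

context prob_space
begin

context
  fixes X :: "'a \<Rightarrow> real" and B :: real
  assumes X_measurable: "X \<in> borel_measurable M" and X_bounded: "AE w in M. \<bar>X w\<bar> \<le> B"
begin

lemma prob_le_eq_1_iff: "prob {w \<in> space M. X w \<le> y} = 1 \<longleftrightarrow> (AE w in M. X w \<le> y)"
  using X_measurable by (intro prob_Collect_eq_1) measurable

lemma AE_le_bound: "AE w in M. X w \<le> B"
  using X_bounded by (auto elim: eventually_mono)

lemma bdd_below_quantile_set:
  assumes "0 \<le> t"
  shows "bdd_below {y. prob {w \<in> space M. X w \<le> y} > t}"
proof (rule bdd_belowI)
  fix y assume "y \<in> {y. prob {w \<in> space M. X w \<le> y} > t}"
  then have pos: "prob {w \<in> space M. X w \<le> y} \<noteq> 0" using assms by simp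
  show "- B \<le> y"
  proof (rule ccontr)
    assume "\<not> - B \<le> y"
    from X_bounded have "AE w in M. \<not> X w \<le> y"
      by (rule eventually_mono) (use \<open>\<not> - B \<le> y\<close> in \<open>auto simp: abs_le_iff\<close>)
    then have "prob {w \<in> space M. X w \<le> y} = 0"
      by (intro prob_eq_0_AE) (auto elim: eventually_mono)
    with pos show False by simp
  qed
qed

lemma quantile_le_if_AE_le:
  assumes "AE w in M. X w \<le> a" "0 \<le> t" "t < 1"
  shows "quantile M X t \<le> a"
  unfolding quantile_def
  using assms prob_le_eq_1_iff[of a] by (intro cInf_lower bdd_below_quantile_set) auto

lemma quantile_mono:
  assumes "0 \<le> t" "t \<le> t'" "t' < 1"
  shows "quantile M X t \<le> quantile M X t'"
proof -
  have "B \<in> {y. prob {w \<in> space M. X w \<le> y} > t'}"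
    using AE_le_bound prob_le_eq_1_iff[of B] \<open>t' < 1\<close> by simp
  then show ?thesis
    unfolding quantile_def using assms bdd_below_quantile_set
    by (intro cInf_superset_mono) auto
qed

lemma less_prob_le_if_quantile_less:
  assumes "quantile M X t < y" "t < 1"
  shows "t < prob {w \<in> space M. X w \<le> y}"
proof -
  have "B \<in> {y. prob {w \<in> space M. X w \<le> y} > t}"
    using AE_le_bound prob_le_eq_1_iff[of B] \<open>t < 1\<close> by simp
  then obtain y' where "t < prob {w \<in> space M. X w \<le> y'}" "y' < y"
    using cInf_lessD[of "{y. prob {w \<in> space M. X w \<le> y} > t}" y] assms(1)
    unfolding quantile_def by auto
  moreover have "prob {w \<in> space M. X w \<le> y'} \<le> prob {w \<in> space M. X w \<le> y}"
    using \<open>y' < y\<close> X_measurable by (intro finite_measure_mono) auto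
  ultimately show ?thesis by simp
qed

lemma quantile_one_eq_SUP: "quantile_one M X = (SUP t\<in>{0..<1}. quantile M X t)"
proof -
  have "(quantile M X \<longlongrightarrow> (SUP t\<in>{..<1} \<inter> {0..}. quantile M X t)) (at 1 within {..<1} \<inter> {0..})"
    using AE_le_bound by (intro Lim_left_bound[where K = B] quantile_mono quantile_le_if_AE_le) auto
  moreover have "at (1::real) within {..<1} \<inter> {0..} = at_left 1"
    by (rule at_within_nhd[of _ "{0<..}"]) auto
  moreover have "{..<1} \<inter> {0..} = {0..<(1::real)}" by auto
  ultimately have "(quantile M X \<longlongrightarrow> (SUP t\<in>{0..<1}. quantile M X t)) (at_left 1)"
    by simp
  then show ?thesis
    unfolding quantile_one_def by (rule tendsto_Lim[OF trivial_limit_at_left_real])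
qed

lemma quantile_le_quantile_one: "0 \<le> t \<Longrightarrow> t < 1 \<Longrightarrow> quantile M X t \<le> quantile_one M X"
  unfolding quantile_one_eq_SUP using AE_le_bound
  by (intro cSUP_upper bdd_aboveI2[where M = B] quantile_le_if_AE_le) auto

lemma quantile_one_le_if_AE_le:
  assumes "AE w in M. X w \<le> a"
  shows "quantile_one M X \<le> a"
  unfolding quantile_one_eq_SUP using assms by (intro cSUP_least quantile_le_if_AE_le) auto

lemma AE_le_quantile_one: "AE w in M. X w \<le> quantile_one M X"
proof -
  have "esssup M (\<lambda>w. ereal (X w)) \<le> ereal (quantile_one M X) + ereal e" if "0 < e" for e
  proof (rule esssup_I)
    let ?y = "quantile_one M X + e"
    have "t \<le> prob {w \<in> space M. X w \<le> ?y}" if "0 < t" "t < 1" for t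
    proof -
      have "quantile M X t < ?y"
        using quantile_le_quantile_one[of t] \<open>0 < e\<close> that by simp
      then show ?thesis
        using less_prob_le_if_quantile_less \<open>t < 1\<close> by (simp add: less_imp_le)
    qed
    then have "1 \<le> prob {w \<in> space M. X w \<le> ?y}"
      by (rule dense_le_bounded[OF zero_less_one])
    then have "AE w in M. X w \<le> ?y"
      by (simp only: measure_ge_1_iff prob_le_eq_1_iff)
    then show "AE w in M. ereal (X w) \<le> ereal (quantile_one M X) + ereal e"
      by (auto elim: eventually_mono)
  qed (use X_measurable in simp)
  then have sup_le: "esssup M (\<lambda>w. ereal (X w)) \<le> ereal (quantile_one M X)"
    by (rule ereal_le_epsilon2)
  show ?thesis
    using esssup_AE[of "\<lambda>w. ereal (X w)" M]
  proof (rule eventually_mono)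
    fix w assume "ereal (X w) \<le> esssup M (\<lambda>w. ereal (X w))"
    then show "X w \<le> quantile_one M X"
      using sup_le by (metis ereal_less_eq(3) order_trans)
  qed
qed

end

end

section \<open>Beating performance\<close>

lemma le_beating_perf_if_icx_ge: "icx_ge M (\<lambda>w. X w - m) X0 \<Longrightarrow> ereal m \<le> beating_perf M X0 X"
  unfolding beating_perf_def by (rule Sup_upper) simp

context prob_space
begin

lemma beating_perf_less_PInf:
  assumes "X \<in> L2 M" "X0 \<in> Linf M"
  shows "beating_perf M X0 X < \<infinity>"
proof -
  have "m \<le> expect M X - expect M X0" if "icx_ge M (\<lambda>w. X w - m) X0" for m
  proof -
    have "expect M X0 \<le> expect M (\<lambda>w. X w - m)"
      using that L2_integrable[OF assms(1)] Linf_integrable[OF assms(2)]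
      by (intro icx_ge_imp_expect_le) auto
    then show ?thesis
      using L2_integrable[OF assms(1)] by (simp add: expect_def prob_space)
  qed
  then have "beating_perf M X0 X \<le> ereal (expect M X - expect M X0)"
    unfolding beating_perf_def by (intro Sup_least) auto
  then show ?thesis
    using le_less_trans by fastforce
qed

(* The supremum defining the beating performance is attained: on the essential range of X0 an
   increasing convex f is Lipschitz with constant L = f (B + 1) - f B, so shifting X0 by less
   than delta changes f (X0) by at most delta * L. *)
lemma icx_ge_if_le_beating_perf:
  assumes "X0 \<in> Linf M" "ereal s \<le> beating_perf M X0 X"
  shows "icx_ge M (\<lambda>w. X w - s) X0"
  unfolding icx_ge_iff_mono_convex
proof (intro allI impI)
  fix f assume f: "mono_convex f"
  then have "mono f" by (simp add: mono_convex_def)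
  obtain B where B: "AE w in M. \<bar>X0 w\<bar> \<le> B" using Linf_bound[OF assms(1)] .
  define L where "L = f (B + 1) - f B"
  have "0 \<le> L" using \<open>mono f\<close> by (simp add: L_def monoD)
  show "ext_expect M (\<lambda>w. f (X0 w)) \<le> ext_expect M (\<lambda>w. f (X w - s))"
  proof (rule ereal_le_epsilon2)
    fix e :: real assume "0 < e"
    define \<delta> where "\<delta> = e / (L + 1)"
    have "0 < \<delta>" "\<delta> * L \<le> e"
      using \<open>0 < e\<close> \<open>0 \<le> L\<close> by (auto simp: \<delta>_def field_simps)
    have "ereal (s - \<delta>) < ereal s" using \<open>0 < \<delta>\<close> by simp
    then have "ereal (s - \<delta>) < beating_perf M X0 X" using assms(2) by (rule less_le_trans)
    then obtain m where icx: "icx_ge M (\<lambda>w. X w - m) X0" and "s - \<delta> < m"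
      unfolding beating_perf_def less_Sup_iff by auto
    define d where "d = s - m"
    have shifted: "icx_ge M (\<lambda>w. X w - s) (\<lambda>w. X0 w - d)"
      using icx_ge_affine[OF icx, of 1 "- d"] by (simp add: d_def algebra_simps)
    have close: "AE w in M. f (X0 w) \<le> f (X0 w - d) + e"
      using B
    proof (rule eventually_mono)
      fix w assume "\<bar>X0 w\<bar> \<le> B"
      show "f (X0 w) \<le> f (X0 w - d) + e"
      proof (cases "d \<le> 0")
        case True
        then have "f (X0 w) \<le> f (X0 w - d)" using \<open>mono f\<close> by (simp add: monoD)
        then show ?thesis using \<open>0 < e\<close> by simp
      next
        case False
        then have "f (X0 w) - f (X0 w - d) \<le> d * L"
          using mono_convex_increment_le[OF f, of "X0 w" B d] \<open>\<bar>X0 w\<bar> \<le> B\<close> by (simp add: L_def)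
        also have "\<dots> \<le> \<delta> * L"
          using \<open>s - \<delta> < m\<close> \<open>0 \<le> L\<close> by (simp add: d_def mult_right_mono)
        finally show ?thesis using \<open>\<delta> * L \<le> e\<close> by simp
      qed
    qed
    have "integrable M (\<lambda>w. f (X0 w - d))"
      using assms(1) \<open>mono f\<close> by (intro Linf_integrable_mono_comp) (auto simp: mono_def)
    have "ext_expect M (\<lambda>w. f (X0 w)) \<le> ext_expect M (\<lambda>w. f (X0 w - d) + e)"
      using close by (rule ext_expect_mono_AE)
    also have "\<dots> = ext_expect M (\<lambda>w. f (X0 w - d)) + ereal e"
      using \<open>integrable M (\<lambda>w. f (X0 w - d))\<close> by (simp add: ext_expect_eq_integral prob_space)
    also have "\<dots> \<le> ext_expect M (\<lambda>w. f (X w - s)) + ereal e"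
      using shifted f unfolding icx_ge_iff_mono_convex by (blast intro: add_right_mono)
    finally show "ext_expect M (\<lambda>w. f (X0 w)) \<le> ext_expect M (\<lambda>w. f (X w - s)) + ereal e" .
  qed
qed

lemma le_beating_perf_iff:
  "X0 \<in> Linf M \<Longrightarrow> ereal s \<le> beating_perf M X0 X \<longleftrightarrow> icx_ge M (\<lambda>w. X w - s) X0"
  using icx_ge_if_le_beating_perf le_beating_perf_if_icx_ge by blast

lemma AE_le_quantile_one_Linf:
  assumes "X \<in> Linf M"
  shows "AE w in M. X w \<le> quantile_one M X"
proof -
  obtain B where "AE w in M. \<bar>X w\<bar> \<le> B" using Linf_bound[OF assms] .
  then show ?thesis using AE_le_quantile_one assms by (simp add: Linf_def)
qed

lemma quantile_one_le_if_AE_le_Linf: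
  assumes "X \<in> Linf M" "AE w in M. X w \<le> a"
  shows "quantile_one M X \<le> a"
proof -
  obtain B where "AE w in M. \<bar>X w\<bar> \<le> B" using Linf_bound[OF assms(1)] .
  then show ?thesis using quantile_one_le_if_AE_le assms by (simp add: Linf_def)
qed

end

section \<open>Efficient strategies\<close>

locale benchmarked_market = prob_space M for M :: "'a measure" +
  fixes \<rho> X0 :: "'a \<Rightarrow> real" and x :: real
  assumes rho_L2: "\<rho> \<in> L2 M"
    and rho_pos: "AE \<omega> in M. \<rho> \<omega> > 0"
    and benchmark_Linf: "X0 \<in> Linf M"
begin

abbreviation cash :: real where
  "cash \<equiv> x / expect M \<rho>"

abbreviation threshold :: real where
  "threshold \<equiv> cash - quantile_one M X0"

lemma expect_rho_pos: "0 < expect M \<rho>"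
  using expect_pos L2_integrable rho_L2 rho_pos by blast

lemma admissible_icx_iff:
  "Y \<in> admissible_icx M \<rho> x (\<lambda>w. X0 w + z) \<longleftrightarrow>
     Y \<in> admissible M \<rho> x \<and> ereal z \<le> beating_perf M X0 Y"
  unfolding admissible_icx_def admissible_def icx_ge_shift_iff le_beating_perf_iff[OF benchmark_Linf]
  by simp

lemma expect_rho_times_const: "expect M (\<lambda>w. \<rho> w * k) = k * expect M \<rho>"
  by (simp add: expect_def)

lemma cash_admissible: "(\<lambda>w. cash) \<in> admissible M \<rho> x"
proof -
  have "expect M (\<lambda>w. \<rho> w * cash) = x"
    unfolding expect_rho_times_const using expect_rho_pos by simp
  then show ?thesis using L2_const by (simp add: admissible_def)
qed

lemma threshold_le_beating_perf_cash: "ereal threshold \<le> beating_perf M X0 (\<lambda>w. cash)"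
  by (intro le_beating_perf_if_icx_ge icx_ge_if_AE_le) (simp add: AE_le_quantile_one_Linf[OF benchmark_Linf])

lemma beating_perf_le_threshold_if_var_eq_0:
  assumes Y: "Y \<in> admissible M \<rho> x" and "var M Y = 0"
  shows "beating_perf M X0 Y \<le> ereal threshold"
proof -
  define k where "k = expect M Y"
  have Y_L2: "Y \<in> L2 M" and budget: "expect M (\<lambda>w. \<rho> w * Y w) \<le> x"
    using Y by (auto simp: admissible_def)
  have Y_const: "AE w in M. Y w = k"
    using AE_eq_expect_if_var_eq_0[OF Y_L2 \<open>var M Y = 0\<close>] by (simp add: k_def)
  have "expect M (\<lambda>w. \<rho> w * Y w) = expect M (\<lambda>w. \<rho> w * k)"
    unfolding expect_def
  proof (rule integral_cong_AE)
    show "(\<lambda>w. \<rho> w * Y w) \<in> borel_measurable M" "(\<lambda>w. \<rho> w * k) \<in> borel_measurable M"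
      using L2_measurable[OF rho_L2] L2_measurable[OF Y_L2] by simp_all
    show "AE w in M. \<rho> w * Y w = \<rho> w * k"
      using Y_const by (rule eventually_mono) simp
  qed
  then have "k \<le> cash"
    using budget expect_rho_pos by (simp add: expect_rho_times_const pos_le_divide_eq)
  have "m \<le> threshold" if "icx_ge M (\<lambda>w. Y w - m) X0" for m
  proof -
    have "icx_ge M (\<lambda>w. k - m) (\<lambda>w. Y w - m)"
      using Y_const by (intro icx_ge_if_AE_le) (auto elim: eventually_mono)
    then have "icx_ge M (\<lambda>w. k - m) X0"
      using that by (rule icx_ge_trans)
    then have "quantile_one M X0 \<le> k - m"
      using benchmark_Linf
      by (intro quantile_one_le_if_AE_le_Linf AE_le_if_icx_ge_const) auto
    then show ?thesis using \<open>k \<le> cash\<close> by simp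
  qed
  then show ?thesis
    unfolding beating_perf_def by (intro Sup_least) auto
qed

lemma mixture_admissible:
  assumes "Y \<in> admissible M \<rho> x" "0 \<le> t" "t \<le> 1"
  shows "(\<lambda>w. t * Y w + (1 - t) * cash) \<in> admissible M \<rho> x"
proof -
  have Y_L2: "Y \<in> L2 M" and budget: "expect M (\<lambda>w. \<rho> w * Y w) \<le> x"
    using assms(1) by (auto simp: admissible_def)
  have "expect M (\<lambda>w. \<rho> w * (t * Y w + (1 - t) * cash))
      = t * expect M (\<lambda>w. \<rho> w * Y w) + (1 - t) * cash * expect M \<rho>"
    using L2_mult_integrable[OF rho_L2 Y_L2] L2_integrable[OF rho_L2]
    by (simp add: expect_def algebra_simps)
  also have "\<dots> \<le> t * x + (1 - t) * x"
    using budget expect_rho_pos \<open>0 \<le> t\<close> by (simp add: mult_left_mono)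
  also have "\<dots> = x"
    by (simp add: algebra_simps)
  finally show ?thesis
    unfolding admissible_def using L2_affine[OF Y_L2] by blast
qed

lemma mixture_beating_perf:
  assumes "ereal m \<le> beating_perf M X0 Y" "0 \<le> t" "t \<le> 1"
  shows "ereal (t * m + (1 - t) * threshold) \<le> beating_perf M X0 (\<lambda>w. t * Y w + (1 - t) * cash)"
proof (rule le_beating_perf_if_icx_ge)
  let ?q = "quantile_one M X0"
  have "icx_ge M (\<lambda>w. Y w - m) X0"
    using assms(1) le_beating_perf_iff[OF benchmark_Linf] by blast
  then have "icx_ge M (\<lambda>w. t * (Y w - m) + (1 - t) * ?q) (\<lambda>w. t * X0 w + (1 - t) * ?q)"
    using \<open>0 \<le> t\<close> by (rule icx_ge_affine)
  moreover have "icx_ge M (\<lambda>w. t * X0 w + (1 - t) * ?q) X0"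
  proof (rule icx_ge_if_AE_le)
    show "AE w in M. X0 w \<le> t * X0 w + (1 - t) * ?q"
      using AE_le_quantile_one_Linf[OF benchmark_Linf]
    proof (rule eventually_mono)
      fix w assume "X0 w \<le> ?q"
      then have "(1 - t) * X0 w \<le> (1 - t) * ?q" using \<open>t \<le> 1\<close> by (simp add: mult_left_mono)
      then show "X0 w \<le> t * X0 w + (1 - t) * ?q" by (simp add: algebra_simps)
    qed
  qed
  ultimately show "icx_ge M (\<lambda>w. t * Y w + (1 - t) * cash - (t * m + (1 - t) * threshold)) X0"
    by (auto dest: icx_ge_trans simp: algebra_simps)
qed

lemma mixing_reduces_variance:
  assumes Y: "Y \<in> admissible M \<rho> x" and "0 < var M Y" "ereal m \<le> beating_perf M X0 Y"
    and "threshold \<le> z" "z < m"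
  obtains Y' where "Y' \<in> admissible M \<rho> x" "ereal z \<le> beating_perf M X0 Y'" "var M Y' < var M Y"
proof -
  define r where "r = (z - threshold) / (m - threshold)"
  define t where "t = (r + 1) / 2"
  have "0 \<le> r" "r < 1"
    using assms(4,5) by (simp_all add: r_def divide_simps)
  then have t: "0 < t" "t < 1" "r \<le> t"
    by (simp_all add: t_def)
  let ?Y' = "\<lambda>w. t * Y w + (1 - t) * cash"
  have "z - threshold \<le> t * (m - threshold)"
    using t(3) assms(4,5) by (simp add: r_def divide_le_eq mult.commute)
  moreover have "z - c \<le> t * (m - c) \<Longrightarrow> z \<le> t * m + (1 - t) * c" for c
    by (simp add: algebra_simps)
  ultimately have "ereal z \<le> ereal (t * m + (1 - t) * threshold)"
    by simp
  also have "\<dots> \<le> beating_perf M X0 ?Y'"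
    using assms(3) t by (intro mixture_beating_perf) auto
  finally have "ereal z \<le> beating_perf M X0 ?Y'" .
  moreover have "var M ?Y' < var M Y"
  proof -
    have "t\<^sup>2 < 1" using t by (simp add: power_less_one_iff)
    then have "t\<^sup>2 * var M Y < var M Y"
      using mult_strict_right_mono[of "t\<^sup>2" 1 "var M Y"] \<open>0 < var M Y\<close> by simp
    then show ?thesis
      using Y var_affine[of Y t "(1 - t) * cash"] by (simp add: admissible_def)
  qed
  moreover have "?Y' \<in> admissible M \<rho> x"
    using t by (intro mixture_admissible[OF Y]) auto
  ultimately show ?thesis
    using that by blast
qed

lemma bpv_efficient_imp_variance_minimal:
  assumes "bpv_efficient M \<rho> X0 x X"
  obtains z where "threshold \<le> z" "variance_minimal M (admissible_icx M \<rho> x (\<lambda>w. X0 w + z)) X"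
proof -
  have X: "X \<in> admissible M \<rho> x"
    and undominated: "\<And>Y. Y \<in> admissible M \<rho> x \<Longrightarrow>
        beating_perf M X0 X \<le> beating_perf M X0 Y \<Longrightarrow> var M Y \<le> var M X \<Longrightarrow>
        beating_perf M X0 X < beating_perf M X0 Y \<or> var M Y < var M X \<Longrightarrow> False"
    using assms unfolding bpv_efficient_def by auto
  have "ereal threshold \<le> beating_perf M X0 X"
  proof (rule ccontr)
    assume "\<not> ereal threshold \<le> beating_perf M X0 X"
    then have "beating_perf M X0 X < beating_perf M X0 (\<lambda>w. cash)"
      using threshold_le_beating_perf_cash by simp
    moreover have "var M (\<lambda>w. cash) \<le> var M X"
      by (simp add: var_def expect_def prob_space)
    ultimately show False
      using undominated[OF cash_admissible] less_imp_le by blast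
  qed
  moreover have "beating_perf M X0 X < \<infinity>"
    using X benchmark_Linf by (intro beating_perf_less_PInf) (simp add: admissible_def)
  ultimately obtain z where z: "beating_perf M X0 X = ereal z" "threshold \<le> z"
    by (cases "beating_perf M X0 X") auto
  have "var M X \<le> var M Y" if "Y \<in> admissible_icx M \<rho> x (\<lambda>w. X0 w + z)" for Y
  proof (rule ccontr)
    assume "\<not> var M X \<le> var M Y"
    moreover have "Y \<in> admissible M \<rho> x" "beating_perf M X0 X \<le> beating_perf M X0 Y"
      using that z(1) by (simp_all add: admissible_icx_iff)
    ultimately show False
      using undominated[of Y] by (simp add: not_le)
  qed
  moreover have "X \<in> admissible_icx M \<rho> x (\<lambda>w. X0 w + z)"
    using X z(1) by (simp add: admissible_icx_iff)
  ultimately have "variance_minimal M (admissible_icx M \<rho> x (\<lambda>w. X0 w + z)) X"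
    unfolding variance_minimal_def by blast
  with z(2) show ?thesis by (rule that)
qed

lemma variance_minimal_imp_bpv_efficient:
  assumes "threshold \<le> z" and "variance_minimal M (admissible_icx M \<rho> x (\<lambda>w. X0 w + z)) X"
  shows "bpv_efficient M \<rho> X0 x X"
proof -
  have X: "X \<in> admissible M \<rho> x" "ereal z \<le> beating_perf M X0 X"
    and minimal: "\<And>Y. Y \<in> admissible M \<rho> x \<Longrightarrow> ereal z \<le> beating_perf M X0 Y \<Longrightarrow>
        var M X \<le> var M Y"
    using assms(2) by (auto simp: variance_minimal_def admissible_icx_iff)
  have False
    if Y: "Y \<in> admissible M \<rho> x"
      and "beating_perf M X0 X \<le> beating_perf M X0 Y" "var M Y \<le> var M X"
      and strict: "beating_perf M X0 X < beating_perf M X0 Y \<or> var M Y < var M X" for Y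
  proof -
    have "ereal z \<le> beating_perf M X0 Y"
      using X(2) \<open>beating_perf M X0 X \<le> beating_perf M X0 Y\<close> by (rule order_trans)
    then have "var M X \<le> var M Y" using minimal Y by blast
    then have "ereal z < beating_perf M X0 Y"
      using strict X(2) by auto
    then obtain m where "z < m" "ereal m \<le> beating_perf M X0 Y"
      by (metis ereal_dense2 ereal_less(2) less_ereal.simps(1) less_imp_le)
    have "0 < var M Y"
    proof (rule ccontr)
      assume "\<not> 0 < var M Y"
      then have "var M Y = 0" using var_nonneg[of M Y] by simp
      then have "beating_perf M X0 Y \<le> ereal threshold"
        by (rule beating_perf_le_threshold_if_var_eq_0[OF Y])
      with \<open>ereal m \<le> beating_perf M X0 Y\<close> have "m \<le> threshold"
        using order_trans ereal_less_eq(3) by blast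
      then show False
        using \<open>z < m\<close> assms(1) by simp
    qed
    then obtain Y' where "Y' \<in> admissible M \<rho> x" "ereal z \<le> beating_perf M X0 Y'" "var M Y' < var M Y"
      using mixing_reduces_variance[OF Y _ \<open>ereal m \<le> _\<close> assms(1) \<open>z < m\<close>] by blast
    then show False
      using minimal \<open>var M Y \<le> var M X\<close> by fastforce
  qed
  then show ?thesis
    unfolding bpv_efficient_def using X(1) by blast
qed

end

theorem proposition8p1:
  fixes M :: "'a measure" and \<rho> X0 Xs :: "'a \<Rightarrow> real" and x :: real
  assumes "prob_space M"
    and "complete_measure M"
    and "nonatomic M"
    and "\<rho> \<in> L2 M"
    and "AE \<omega> in M. \<rho> \<omega> > 0"
    and "var M \<rho> > 0"
    and "X0 \<in> Linf M"
  shows "bpv_efficient M \<rho> X0 x Xs \<longleftrightarrow>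
    (\<exists>z. z \<ge> x / expect M \<rho> - quantile_one M X0 \<and>
         variance_minimal M (admissible_icx M \<rho> x (\<lambda>\<omega>. X0 \<omega> + z)) Xs)"
proof -
  interpret benchmarked_market M \<rho> X0 x
    using assms by (simp add: benchmarked_market_def benchmarked_market_axioms_def)
  show ?thesis
    using bpv_efficient_imp_variance_minimal variance_minimal_imp_bpv_efficient by blast
qed

end
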